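(* The Borda SCC and the Copeland SCC are both immune to the reversal bias of type 3; that is, for $C\in\{Bor,Cop\}$ and every $p\in\mathcal P$, if $C(p)\cap C(p^r)\neq\varnothing$ then $C(p)=N$.
   Context: Let $n,h\ge2$, $N=\{1,\dots,n\}$, $H=\{1,\dots,h\}$. A preference profile is an $h$-tuple $p$ of linear orders on $N$; $\mathcal P$ is the set of profiles; $p^r$ is obtained by reversing each order; $\mathrm{rank}_{p_i}(x)=|\{y: y>_{p_i}x\}|+1$. Let $\mu_0=\lceil (h+1)/2\rceil$, and write $x>^p_{\mu_0}y$ if $|\{i\in H: x>_{p_i}y\}|\ge\mu_0$. The Borda SCC is $Bor(p)=\mathrm{argmax}_{x\in N}\sum_{i=1}^h(n-\mathrm{rank}_{p_i}(x))$; the Copeland SCC is $Cop(p)=\mathrm{argmax}_{x\in N}\big(|\{y: x>^p_{\mu_0}y\}|-|\{y: y>^p_{\mu_0}x\}|\big)$. An SCC $C$ suffers the reversal bias of type 3 if there exists $p$ with $|C(p)|<n$ and $C(p)\cap C(p^r)\ne\varnothing$. *)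

theory Defs
  imports Complex_Main
begin

text \<open>Alternatives N = {1..n}, voters H = {1..h}. A linear order on N is a relation
  r with linear_order_on {1..n} r; (x,y) \<in> r means x is ranked weakly above y.
  A profile is a function p from voters to linear orders (only voters in {1..h} matter).\<close>

definition is_profile :: "nat \<Rightarrow> nat \<Rightarrow> (nat \<Rightarrow> (nat \<times> nat) set) \<Rightarrow> bool" where
  "is_profile n h p \<longleftrightarrow> (\<forall>i\<in>{1..h}. linear_order_on {1..n} (p i))"

definition prefers :: "(nat \<times> nat) set \<Rightarrow> nat \<Rightarrow> nat \<Rightarrow> bool" where
  "prefers r x y \<longleftrightarrow> (x, y) \<in> r \<and> x \<noteq> y"

definition reversal :: "(nat \<Rightarrow> (nat \<times> nat) set) \<Rightarrow> (nat \<Rightarrow> (nat \<times> nat) set)" where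
  "reversal p = (\<lambda>i. converse (p i))"

definition rank :: "nat \<Rightarrow> (nat \<times> nat) set \<Rightarrow> nat \<Rightarrow> nat" where
  "rank n r x = card {y \<in> {1..n}. prefers r y x} + 1"

definition borda_score :: "nat \<Rightarrow> nat \<Rightarrow> (nat \<Rightarrow> (nat \<times> nat) set) \<Rightarrow> nat \<Rightarrow> int" where
  "borda_score n h p x = (\<Sum>i\<in>{1..h}. int n - int (rank n (p i) x))"

definition Bor :: "nat \<Rightarrow> nat \<Rightarrow> (nat \<Rightarrow> (nat \<times> nat) set) \<Rightarrow> nat set" where
  "Bor n h p = {x \<in> {1..n}. \<forall>y\<in>{1..n}. borda_score n h p y \<le> borda_score n h p x}"

definition mu0 :: "nat \<Rightarrow> nat" where
  "mu0 h = nat \<lceil>(real h + 1) / 2\<rceil>"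

definition maj :: "nat \<Rightarrow> (nat \<Rightarrow> (nat \<times> nat) set) \<Rightarrow> nat \<Rightarrow> nat \<Rightarrow> bool" where
  "maj h p x y \<longleftrightarrow> card {i \<in> {1..h}. prefers (p i) x y} \<ge> mu0 h"

definition copeland_score :: "nat \<Rightarrow> nat \<Rightarrow> (nat \<Rightarrow> (nat \<times> nat) set) \<Rightarrow> nat \<Rightarrow> int" where
  "copeland_score n h p x =
     int (card {y \<in> {1..n}. maj h p x y}) - int (card {y \<in> {1..n}. maj h p y x})"

definition Cop :: "nat \<Rightarrow> nat \<Rightarrow> (nat \<Rightarrow> (nat \<times> nat) set) \<Rightarrow> nat set" where
  "Cop n h p = {x \<in> {1..n}. \<forall>y\<in>{1..n}. copeland_score n h p y \<le> copeland_score n h p x}"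

end

theory Submission
  imports Defs
begin

text \<open>Reversing a profile turns every score into an affine decreasing function of the original
  one: the Borda score becomes \<open>h(n-1) - s\<close> and the Copeland score becomes \<open>-s\<close>.  An
  alternative maximising both \<open>s\<close> and \<open>c - s\<close> forces \<open>s\<close> to be constant, so every
  alternative is a winner.\<close>

definition argmax_on :: "('a \<Rightarrow> 'b::order) \<Rightarrow> 'a set \<Rightarrow> 'a set" where
  "argmax_on s A = {x \<in> A. \<forall>y\<in>A. s y \<le> s x}"

lemma argmax_on_eq_if_meets_argmax_on_diff:
  fixes s t :: "'a \<Rightarrow> 'b::ordered_ab_group_add"
  assumes reversed: "\<And>x. x \<in> A \<Longrightarrow> t x = c - s x"
    and "argmax_on s A \<inter> argmax_on t A \<noteq> {}"
  shows "argmax_on s A = A"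
proof -
  obtain x where "x \<in> A" and s_max: "\<And>y. y \<in> A \<Longrightarrow> s y \<le> s x"
    and t_max: "\<And>y. y \<in> A \<Longrightarrow> t y \<le> t x"
    using assms(2) unfolding argmax_on_def by blast
  have s_min: "s x \<le> s y" if "y \<in> A" for y
  proof -
    have "c - s y \<le> c - s x"
      using t_max[OF that] reversed[OF that] reversed[OF \<open>x \<in> A\<close>] by simp
    then show ?thesis by simp
  qed
  have "s z \<le> s y" if "y \<in> A" and "z \<in> A" for y z
    using order_trans[OF s_max[OF \<open>z \<in> A\<close>] s_min[OF \<open>y \<in> A\<close>]] .
  then show ?thesis unfolding argmax_on_def by blast
qed

lemma Bor_eq_argmax_on: "Bor n h p = argmax_on (borda_score n h p) {1..n}"
  unfolding Bor_def argmax_on_def ..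

lemma Cop_eq_argmax_on: "Cop n h p = argmax_on (copeland_score n h p) {1..n}"
  unfolding Cop_def argmax_on_def ..

lemma card_prefers_above_plus_below:
  assumes lo: "linear_order_on A r" and "finite A" and x: "x \<in> A"
  shows "card {y \<in> A. prefers r y x} + card {y \<in> A. prefers r x y} = card A - 1"
proof -
  let ?above = "{y \<in> A. prefers r y x}" and ?below = "{y \<in> A. prefers r x y}"
  have "total_on A r" and "antisym r"
    using lo by (auto simp: linear_order_on_def partial_order_on_def)
  then have partition: "?above \<union> ?below = A - {x}" and disjoint: "?above \<inter> ?below = {}"
    using x unfolding total_on_def antisym_def prefers_def by auto
  have "card ?above + card ?below = card (?above \<union> ?below)"
    using \<open>finite A\<close> disjoint by (intro card_Un_disjoint[symmetric]) auto
  then show ?thesis unfolding partition using x \<open>finite A\<close> by simp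
qed

lemma rank_converse:
  assumes "linear_order_on {1..n} r" and "x \<in> {1..n}"
  shows "int (rank n (converse r) x) = int n + 1 - int (rank n r x)"
proof -
  have "{y \<in> {1..n}. prefers (converse r) y x} = {y \<in> {1..n}. prefers r x y}"
    unfolding prefers_def by auto
  moreover have "n \<ge> 1" using assms(2) by simp
  ultimately show ?thesis
    using card_prefers_above_plus_below[OF assms(1) _ assms(2)] unfolding rank_def by simp
qed

lemma borda_score_reversal:
  assumes "is_profile n h p" and "x \<in> {1..n}"
  shows "borda_score n h (reversal p) x = int h * (int n - 1) - borda_score n h p x"
proof -
  have "borda_score n h (reversal p) x =
      (\<Sum>i\<in>{1..h}. (int n - 1) - (int n - int (rank n (p i) x)))"
    unfolding borda_score_def reversal_def
    using assms rank_converse unfolding is_profile_def by (intro sum.cong) auto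
  also have "\<dots> = int h * (int n - 1) - borda_score n h p x"
    unfolding borda_score_def by (simp add: sum_subtractf algebra_simps)
  finally show ?thesis .
qed

lemma maj_reversal: "maj h (reversal p) x y \<longleftrightarrow> maj h p y x"
proof -
  have "{i \<in> {1..h}. prefers (reversal p i) x y} = {i \<in> {1..h}. prefers (p i) y x}"
    unfolding reversal_def prefers_def by blast
  then show ?thesis unfolding maj_def by simp
qed

text \<open>Written as \<open>0 - s\<close> to match the shape \<open>c - s\<close> of the argmax lemma.\<close>

lemma copeland_score_reversal:
  "copeland_score n h (reversal p) x = 0 - copeland_score n h p x"
  unfolding copeland_score_def maj_reversal by simp

lemma Bor_eq_all_if_meets_reversal:
  assumes "is_profile n h p" and "Bor n h p \<inter> Bor n h (reversal p) \<noteq> {}"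
  shows "Bor n h p = {1..n}"
  using assms(2) unfolding Bor_eq_argmax_on
  by (rule argmax_on_eq_if_meets_argmax_on_diff[rotated]) (rule borda_score_reversal[OF assms(1)])

lemma Cop_eq_all_if_meets_reversal:
  assumes "Cop n h p \<inter> Cop n h (reversal p) \<noteq> {}"
  shows "Cop n h p = {1..n}"
  using assms unfolding Cop_eq_argmax_on
  by (rule argmax_on_eq_if_meets_argmax_on_diff[rotated]) (rule copeland_score_reversal)

theorem proposition2:
  fixes n h :: nat
  assumes "n \<ge> 2" and "h \<ge> 2"
  shows "\<forall>C \<in> {Bor n h, Cop n h}. \<forall>p. is_profile n h p \<longrightarrow>
           C p \<inter> C (reversal p) \<noteq> {} \<longrightarrow> C p = {1..n}"
  using Bor_eq_all_if_meets_reversal Cop_eq_all_if_meets_reversal by blast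

end
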